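(* Let $(H,\theta)$ be a Higgs bundle over a complex manifold $B$ with a smooth Hermitian metric $h$ on $H$. If the Higgs curvature $(D^H)^2$ has vanishing $(2,0)$-part (equivalently $[\partial^h,\theta]=0$), then the fundamental form $\omega=i\sum_{j,k}(\theta_j,\theta_k)\,dt^j\wedge d\bar t^k$ of the Hodge semi-metric is $d$-closed.
   Context: A Higgs bundle over $B$ is a pair $(H,\theta)$ with $H$ a holomorphic vector bundle and $\theta$ an $\mathrm{End}(H)$-valued holomorphic $1$-form with $\theta\wedge\theta\equiv0$. Locally $\theta=\sum_j dt^j\otimes\theta_j$. $(\cdot,\cdot)$ is the Hermitian metric on $\mathrm{End}(H)\cong H\otimes H^*$ induced by $h$, and the Hodge semi-metric on $B$ is $(v,w)_H:=(\theta_v,\theta_w)$ with $\theta_v=v\lrcorner\theta$. $D^h=\bar\partial+\partial^h$ is the Chern connection of $(H,h)$, $\theta^*=\sum_j d\bar t^j\otimes\theta_j^*$ with $\theta_j^*$ the $h$-adjoint, and the Higgs connection is $D^H:=D^h+\theta+\theta^*$; its curvature $(D^H)^2$ is the Higgs curvature. *)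

theory Defs
  imports "HOL-Analysis.Analysis"
begin

(* Local (coordinate-chart) setting: B is replaced by an open set U of complex^'n with
   holomorphic coordinates t = (t^j)_j, and H|_U is trivialised by a holomorphic frame
   e_1..e_r (index type 'r).  Sections are column vectors, endomorphisms are matrices
   complex^'r^'r acting on columns. *)

fun iter_pd :: "'a::real_normed_vector list \<Rightarrow> ('a \<Rightarrow> 'b::real_normed_vector) \<Rightarrow> 'a \<Rightarrow> 'b" where
  "iter_pd [] f = f"
| "iter_pd (v # vs) f = (\<lambda>t. frechet_derivative (iter_pd vs f) (at t) v)"

definition smooth_on :: "'a::real_normed_vector set \<Rightarrow> ('a \<Rightarrow> 'b::real_normed_vector) \<Rightarrow> bool" where
  "smooth_on U f \<longleftrightarrow> (\<forall>vs. \<forall>t\<in>U. iter_pd vs f differentiable (at t))"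

definition holo_on :: "(complex^'n) set \<Rightarrow> (complex^'n \<Rightarrow> complex) \<Rightarrow> bool" where
  "holo_on U f \<longleftrightarrow> (\<forall>t\<in>U. f differentiable (at t) \<and>
     (\<forall>v. frechet_derivative f (at t) (\<i> *s v) = \<i> * frechet_derivative f (at t) v))"

definition wirt :: "(complex^'n \<Rightarrow> complex) \<Rightarrow> 'n \<Rightarrow> complex^'n \<Rightarrow> complex" where
  "wirt f j t = (frechet_derivative f (at t) (axis j 1) - \<i> * frechet_derivative f (at t) (axis j \<i>)) / 2"

definition wirtbar :: "(complex^'n \<Rightarrow> complex) \<Rightarrow> 'n \<Rightarrow> complex^'n \<Rightarrow> complex" where
  "wirtbar f j t = (frechet_derivative f (at t) (axis j 1) + \<i> * frechet_derivative f (at t) (axis j \<i>)) / 2"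

definition mwirt :: "(complex^'n \<Rightarrow> complex^'r^'r) \<Rightarrow> 'n \<Rightarrow> complex^'n \<Rightarrow> complex^'r^'r" where
  "mwirt F j t = (\<chi> a b. wirt (\<lambda>s. F s $ a $ b) j t)"

definition cadj :: "complex^'r^'r \<Rightarrow> complex^'r^'r" where
  "cadj M = (\<chi> i j. cnj (M $ j $ i))"

(* Higgs bundle in the frame: theta = sum_j dt^j (x) theta_j, theta_j holomorphic matrices,
   theta /\ theta = 0  <->  [theta_j, theta_k] = 0 *)
definition higgs_field :: "(complex^'n) set \<Rightarrow> ('n \<Rightarrow> complex^'n \<Rightarrow> complex^'r^'r) \<Rightarrow> bool" where
  "higgs_field U \<theta> \<longleftrightarrow> (\<forall>j a b. holo_on U (\<lambda>t. \<theta> j t $ a $ b)) \<and>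
     (\<forall>j k. \<forall>t\<in>U. \<theta> j t ** \<theta> k t = \<theta> k t ** \<theta> j t)"

(* Smooth Hermitian metric h on H|_U, given by the matrix G with G$a$b = h(e_b, e_a),
   so that h(u,v) = v^H G u for coefficient columns u, v. *)
definition herm_metric :: "(complex^'n) set \<Rightarrow> (complex^'n \<Rightarrow> complex^'r^'r) \<Rightarrow> bool" where
  "herm_metric U G \<longleftrightarrow> (\<forall>a b. smooth_on U (\<lambda>t. G t $ a $ b)) \<and>
     (\<forall>t\<in>U. cadj (G t) = G t \<and>
        (\<forall>v::complex^'r. v \<noteq> 0 \<longrightarrow> 0 < Re (\<Sum>a\<in>UNIV. \<Sum>b\<in>UNIV. cnj (v $ a) * G t $ a $ b * v $ b)))"

(* Chern connection D^h = d + A in the holomorphic frame, A = sum_j A_j dt^j, A_j = G^{-1} dG/dt^j *)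
definition chern_conn :: "(complex^'n \<Rightarrow> complex^'r^'r) \<Rightarrow> 'n \<Rightarrow> complex^'n \<Rightarrow> complex^'r^'r" where
  "chern_conn G j t = matrix_inv (G t) ** mwirt G j t"

(* h-adjoint of an endomorphism: h(M u, v) = h(u, M^adj v) *)
definition hadj :: "(complex^'n \<Rightarrow> complex^'r^'r) \<Rightarrow> complex^'n \<Rightarrow> complex^'r^'r \<Rightarrow> complex^'r^'r" where
  "hadj G t M = matrix_inv (G t) ** cadj M ** G t"

(* Hermitian metric on End(H) = H (x) H^* induced by h: (M,N) = tr(M N^adj) *)
definition end_ip :: "(complex^'n \<Rightarrow> complex^'r^'r) \<Rightarrow> complex^'n \<Rightarrow> complex^'r^'r \<Rightarrow> complex^'r^'r \<Rightarrow> complex" where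
  "end_ip G t M N = trace (M ** hadj G t N)"

definition hodge_coeff :: "(complex^'n \<Rightarrow> complex^'r^'r) \<Rightarrow> ('n \<Rightarrow> complex^'n \<Rightarrow> complex^'r^'r) \<Rightarrow> 'n \<Rightarrow> 'n \<Rightarrow> complex^'n \<Rightarrow> complex" where
  "hodge_coeff G \<theta> j k t = end_ip G t (\<theta> j t) (\<theta> k t)"

(* Coefficient of dt^l /\ dt^j in the (2,0)-part of the Higgs curvature (D^H)^2, where
   D^H = d + A + theta + theta-adjoint; (D^H)^2 = dM + M/\M with M = A + theta + theta-adjoint, whose
   (2,0)-part is d'A + A/\A + d'theta + A/\theta + theta/\A + theta/\theta. *)
definition higgs_curv_20 :: "(complex^'n \<Rightarrow> complex^'r^'r) \<Rightarrow> ('n \<Rightarrow> complex^'n \<Rightarrow> complex^'r^'r) \<Rightarrow> 'n \<Rightarrow> 'n \<Rightarrow> complex^'n \<Rightarrow> complex^'r^'r" where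
  "higgs_curv_20 G \<theta> l j t =
     (mwirt (chern_conn G j) l t - mwirt (chern_conn G l) j t)
   + (chern_conn G l t ** chern_conn G j t - chern_conn G j t ** chern_conn G l t)
   + (mwirt (\<theta> j) l t - mwirt (\<theta> l) j t)
   + (chern_conn G l t ** \<theta> j t - chern_conn G j t ** \<theta> l t)
   + (\<theta> l t ** chern_conn G j t - \<theta> j t ** chern_conn G l t)
   + (\<theta> l t ** \<theta> j t - \<theta> j t ** \<theta> l t)"

(* omega = i sum_{j,k} g_{jk} dt^j /\ d(conj t^k), g_{jk} = (theta_j, theta_k).
   d omega = d' omega + d'' omega;
   coefficient of dt^l /\ dt^j /\ d(conj t^k) in d' omega:  i (d_l g_{jk} - d_j g_{lk});
   coefficient of dt^j /\ d(conj t^l) /\ d(conj t^k) in d'' omega: -i (dbar_l g_{jk} - dbar_k g_{jl}). *)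
definition domega_21 :: "(complex^'n \<Rightarrow> complex^'r^'r) \<Rightarrow> ('n \<Rightarrow> complex^'n \<Rightarrow> complex^'r^'r) \<Rightarrow> 'n \<Rightarrow> 'n \<Rightarrow> 'n \<Rightarrow> complex^'n \<Rightarrow> complex" where
  "domega_21 G \<theta> l j k t =
     \<i> * (wirt (hodge_coeff G \<theta> j k) l t - wirt (hodge_coeff G \<theta> l k) j t)"

definition domega_12 :: "(complex^'n \<Rightarrow> complex^'r^'r) \<Rightarrow> ('n \<Rightarrow> complex^'n \<Rightarrow> complex^'r^'r) \<Rightarrow> 'n \<Rightarrow> 'n \<Rightarrow> 'n \<Rightarrow> complex^'n \<Rightarrow> complex" where
  "domega_12 G \<theta> j l k t =
     - \<i> * (wirtbar (hodge_coeff G \<theta> j k) l t - wirtbar (hodge_coeff G \<theta> j l) k t)"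

definition fundamental_form_d_closed :: "(complex^'n) set \<Rightarrow> (complex^'n \<Rightarrow> complex^'r^'r) \<Rightarrow> ('n \<Rightarrow> complex^'n \<Rightarrow> complex^'r^'r) \<Rightarrow> bool" where
  "fundamental_form_d_closed U G \<theta> \<longleftrightarrow>
     (\<forall>t\<in>U. \<forall>l j k. domega_21 G \<theta> l j k t = 0 \<and> domega_12 G \<theta> j l k t = 0)"

end

theory Submission
  imports Defs
begin

(* In a holomorphic frame the Chern connection form is A = G\<^sup>-\<^sup>1 \<partial>G, and its (2,0)-curvature
   \<partial>A + A \<wedge> A vanishes identically because second derivatives of G commute. With \<theta> \<wedge> \<theta> = 0,
   the hypothesis therefore says exactly that the coefficients \<partial>\<^sub>l\<theta>\<^sub>j + [A\<^sub>l, \<theta>\<^sub>j] of [\<partial>\<^sup>h, \<theta>]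
   are symmetric in l and j. Since \<theta>\<^sub>k\<^sup>* is antiholomorphic and the Chern connection is compatible
   with h, \<partial>\<^sub>l (\<theta>\<^sub>j, \<theta>\<^sub>k) = (\<partial>\<^sub>l\<theta>\<^sub>j + [A\<^sub>l, \<theta>\<^sub>j], \<theta>\<^sub>k) is symmetric in l and j as well,
   which is the vanishing of the (2,1)-part of d\<omega>. Finally (\<theta>\<^sub>j, \<theta>\<^sub>k) is Hermitian in j and k,
   so the (1,2)-part of d\<omega> is the conjugate of the (2,1)-part. *)

section \<open>Symmetry of second derivatives\<close>

lemma has_vector_derivative_along_line:
  assumes "f differentiable (at (p + q *\<^sub>R w))"
  shows "((\<lambda>q. f (p + q *\<^sub>R w)) has_vector_derivative frechet_derivative f (at (p + q *\<^sub>R w)) w) (at q)"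
proof -
  let ?x = "p + q *\<^sub>R w"
  have Df: "(f has_derivative frechet_derivative f (at ?x)) (at ?x)"
    using assms frechet_derivative_works by blast
  have "((\<lambda>q. p + q *\<^sub>R w) has_derivative (\<lambda>h. h *\<^sub>R w)) (at q)"
    by (auto intro!: derivative_eq_intros)
  from has_derivative_compose[OF this Df] show ?thesis
    unfolding has_vector_derivative_def
    by (simp add: linear_scale[OF has_derivative_linear[OF Df]])
qed

lemma norm_increment_minus_linear_le:
  fixes g :: "real \<Rightarrow> 'b::real_inner"
  assumes "0 < s"
    and deriv: "\<And>q. 0 \<le> q \<Longrightarrow> q \<le> s \<Longrightarrow> (g has_vector_derivative g' q) (at q)"
    and near: "\<And>q. 0 \<le> q \<Longrightarrow> q \<le> s \<Longrightarrow> norm (g' q - C) \<le> e"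
  shows "norm (g s - g 0 - s *\<^sub>R C) \<le> s * e"
proof -
  define k where "k q = g q - q *\<^sub>R C" for q
  have k_deriv: "(k has_vector_derivative g' q - C) (at q)" if "0 \<le> q" "q \<le> s" for q
    unfolding k_def using deriv[OF that] by (auto intro!: derivative_eq_intros)
  then have "continuous_on {0..s} k"
    by (intro continuous_at_imp_continuous_on ballI) (auto dest: has_vector_derivative_continuous)
  then obtain q where q: "q \<in> {0<..<s}" "norm (k s - k 0) \<le> norm ((s - 0) *\<^sub>R (g' q - C))"
    using mvt_general[OF \<open>0 < s\<close>, of k "\<lambda>q h. h *\<^sub>R (g' q - C)"] k_deriv
    unfolding has_vector_derivative_def by force
  have "norm ((s - 0) *\<^sub>R (g' q - C)) \<le> s * e"
    using near[of q] q(1) \<open>0 < s\<close> by (simp add: mult_left_mono)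
  with q(2) show ?thesis by (simp add: k_def algebra_simps)
qed

lemma second_difference_bound:
  fixes f :: "'a::real_normed_vector \<Rightarrow> 'b::real_inner"
  assumes "0 < s"
    and f_diff: "\<And>r q. 0 \<le> r \<Longrightarrow> r \<le> s \<Longrightarrow> 0 \<le> q \<Longrightarrow> q \<le> s \<Longrightarrow>
      f differentiable (at (t + r *\<^sub>R v + q *\<^sub>R w))"
    and Dv_diff: "\<And>r q. 0 \<le> r \<Longrightarrow> r \<le> s \<Longrightarrow> 0 \<le> q \<Longrightarrow> q \<le> s \<Longrightarrow>
      (\<lambda>y. frechet_derivative f (at y) v) differentiable (at (t + r *\<^sub>R v + q *\<^sub>R w))"
    and near: "\<And>r q. 0 \<le> r \<Longrightarrow> r \<le> s \<Longrightarrow> 0 \<le> q \<Longrightarrow> q \<le> s \<Longrightarrow>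
      norm (frechet_derivative (\<lambda>y. frechet_derivative f (at y) v) (at (t + r *\<^sub>R v + q *\<^sub>R w)) w - B) \<le> e"
  shows "norm (f (t + s *\<^sub>R v + s *\<^sub>R w) - f (t + s *\<^sub>R v) - f (t + s *\<^sub>R w) + f t - s\<^sup>2 *\<^sub>R B) \<le> e * s\<^sup>2"
proof -
  define Dv where "Dv = (\<lambda>y. frechet_derivative f (at y) v)"
  have "0 \<le> s"
    using \<open>0 < s\<close> by simp
  have Dv_step: "norm (Dv (t + r *\<^sub>R v + s *\<^sub>R w) - Dv (t + r *\<^sub>R v) - s *\<^sub>R B) \<le> s * e"
    if "0 \<le> r" "r \<le> s" for r
  proof -
    have "norm (Dv (t + r *\<^sub>R v + s *\<^sub>R w) - Dv (t + r *\<^sub>R v + 0 *\<^sub>R w) - s *\<^sub>R B) \<le> s * e"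
      using Dv_diff[OF that] near[OF that] unfolding Dv_def[symmetric]
      by (intro norm_increment_minus_linear_le[OF \<open>0 < s\<close>]) (auto intro: has_vector_derivative_along_line)
    then show ?thesis
      by simp
  qed
  have "((\<lambda>r. f (t + s *\<^sub>R w + r *\<^sub>R v) - f (t + r *\<^sub>R v)) has_vector_derivative
      Dv (t + r *\<^sub>R v + s *\<^sub>R w) - Dv (t + r *\<^sub>R v)) (at r)" if "0 \<le> r" "r \<le> s" for r
  proof -
    from f_diff[OF that \<open>0 \<le> s\<close> order_refl] f_diff[OF that order_refl \<open>0 \<le> s\<close>]
    have "f differentiable (at (t + s *\<^sub>R w + r *\<^sub>R v))" "f differentiable (at (t + r *\<^sub>R v))"
      by (simp_all add: add_ac)
    from has_vector_derivative_diff[OF has_vector_derivative_along_line[OF this(1)]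
        has_vector_derivative_along_line[OF this(2)]]
    show ?thesis
      by (simp add: Dv_def add_ac)
  qed
  from norm_increment_minus_linear_le[OF \<open>0 < s\<close> this Dv_step]
  have "norm (f (t + s *\<^sub>R v + s *\<^sub>R w) - f (t + s *\<^sub>R v) - (f (t + s *\<^sub>R w) - f t) - s *\<^sub>R (s *\<^sub>R B))
      \<le> s * (s * e)"
    by (simp add: add_ac)
  then show ?thesis
    by (simp add: power2_eq_square algebra_simps)
qed

lemma second_difference_approx:
  fixes f :: "'a::real_normed_vector \<Rightarrow> 'b::real_inner"
  assumes "open U" "t \<in> U"
    and f_diff: "\<And>x. x \<in> U \<Longrightarrow> f differentiable (at x)"
    and Dv_diff: "\<And>x. x \<in> U \<Longrightarrow> (\<lambda>y. frechet_derivative f (at y) v) differentiable (at x)"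
    and cont: "isCont (\<lambda>x. frechet_derivative (\<lambda>y. frechet_derivative f (at y) v) (at x) w) t"
    and "0 < e"
  shows "\<forall>\<^sub>F s in at_right 0. norm (f (t + s *\<^sub>R v + s *\<^sub>R w) - f (t + s *\<^sub>R v) - f (t + s *\<^sub>R w) + f t
           - s\<^sup>2 *\<^sub>R frechet_derivative (\<lambda>y. frechet_derivative f (at y) v) (at t) w) \<le> e * s\<^sup>2"
proof -
  define B where "B = frechet_derivative (\<lambda>y. frechet_derivative f (at y) v) (at t) w"
  obtain \<delta> where "0 < \<delta>" and \<delta>_U: "ball t \<delta> \<subseteq> U"
    and \<delta>_near: "\<And>x. x \<in> ball t \<delta> \<Longrightarrow> norm (frechet_derivative (\<lambda>y. frechet_derivative f (at y) v) (at x) w - B) \<le> e"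
  proof -
    obtain \<delta>1 where "0 < \<delta>1"
      and "\<forall>x\<in>ball t \<delta>1. norm (frechet_derivative (\<lambda>y. frechet_derivative f (at y) v) (at x) w - B) < e"
      using cont \<open>0 < e\<close> unfolding continuous_at_eps_delta B_def
      by (metis dist_norm dist_commute mem_ball)
    moreover obtain \<delta>2 where "0 < \<delta>2" "ball t \<delta>2 \<subseteq> U"
      using assms(1,2) open_contains_ball by blast
    ultimately show thesis
      by (intro that[of "min \<delta>1 \<delta>2"]) (auto intro: less_imp_le)
  qed
  have "\<forall>\<^sub>F s in at_right 0. s \<in> {0<..<\<delta> / (norm v + norm w + 1)}"
    using \<open>0 < \<delta>\<close> by (intro eventually_at_right_real) (simp add: add_nonneg_pos)
  then show ?thesis
    unfolding B_def[symmetric]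
  proof (rule eventually_mono)
    fix s assume "s \<in> {0<..<\<delta> / (norm v + norm w + 1)}"
    then have "0 < s" and s_small: "s * (norm v + norm w + 1) < \<delta>"
      by (auto simp: pos_less_divide_eq add_nonneg_pos)
    have "t + r *\<^sub>R v + q *\<^sub>R w \<in> ball t \<delta>" if "0 \<le> r" "r \<le> s" "0 \<le> q" "q \<le> s" for r q
    proof -
      have "norm (r *\<^sub>R v + q *\<^sub>R w) \<le> r * norm v + q * norm w"
        using that by (metis abs_of_nonneg norm_scaleR norm_triangle_ineq)
      also have "\<dots> \<le> s * (norm v + norm w + 1)"
        using mult_right_mono[OF that(2) norm_ge_zero[of v]] mult_right_mono[OF that(4) norm_ge_zero[of w]] that(1,2)
        by (simp add: distrib_left)
      finally have "norm (r *\<^sub>R v + q *\<^sub>R w) < \<delta>"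
        using s_small by linarith
      then show ?thesis
        by (metis add.assoc add_diff_cancel_left' dist_commute dist_norm mem_ball)
    qed
    with \<delta>_U \<delta>_near show "norm (f (t + s *\<^sub>R v + s *\<^sub>R w) - f (t + s *\<^sub>R v) - f (t + s *\<^sub>R w) + f t - s\<^sup>2 *\<^sub>R B)
        \<le> e * s\<^sup>2"
      by (intro second_difference_bound[OF \<open>0 < s\<close>] f_diff Dv_diff) blast+
  qed
qed

lemma frechet_derivative_second_symmetric:
  fixes f :: "'a::real_normed_vector \<Rightarrow> 'b::real_inner"
  assumes "open U" "t \<in> U"
    and "\<And>x. x \<in> U \<Longrightarrow> f differentiable (at x)"
    and "\<And>x. x \<in> U \<Longrightarrow> (\<lambda>y. frechet_derivative f (at y) v) differentiable (at x)"
    and "\<And>x. x \<in> U \<Longrightarrow> (\<lambda>y. frechet_derivative f (at y) w) differentiable (at x)"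
    and "isCont (\<lambda>x. frechet_derivative (\<lambda>y. frechet_derivative f (at y) v) (at x) w) t"
    and "isCont (\<lambda>x. frechet_derivative (\<lambda>y. frechet_derivative f (at y) w) (at x) v) t"
  shows "frechet_derivative (\<lambda>y. frechet_derivative f (at y) v) (at t) w
       = frechet_derivative (\<lambda>y. frechet_derivative f (at y) w) (at t) v"
proof (rule ccontr)
  define B1 where "B1 = frechet_derivative (\<lambda>y. frechet_derivative f (at y) v) (at t) w"
  define B2 where "B2 = frechet_derivative (\<lambda>y. frechet_derivative f (at y) w) (at t) v"
  define \<Delta> where "\<Delta> s = f (t + s *\<^sub>R v + s *\<^sub>R w) - f (t + s *\<^sub>R v) - f (t + s *\<^sub>R w) + f t" for s
  assume "\<not> ?thesis"
  then have pos: "0 < norm (B1 - B2) / 4" by (simp add: B1_def B2_def)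
  \<comment> \<open>both \<open>B1\<close> and \<open>B2\<close> are the limit of \<open>\<Delta> s / s\<^sup>2\<close> as \<open>s \<rightarrow> 0\<^sup>+\<close>\<close>
  have "\<forall>\<^sub>F s in at_right 0. norm (\<Delta> s - s\<^sup>2 *\<^sub>R B1) \<le> norm (B1 - B2) / 4 * s\<^sup>2"
    using second_difference_approx[OF assms(1-4,6) pos] unfolding \<Delta>_def B1_def .
  moreover have "\<forall>\<^sub>F s in at_right 0. norm (\<Delta> s - s\<^sup>2 *\<^sub>R B2) \<le> norm (B1 - B2) / 4 * s\<^sup>2"
  proof -
    have "\<Delta> s = f (t + s *\<^sub>R w + s *\<^sub>R v) - f (t + s *\<^sub>R w) - f (t + s *\<^sub>R v) + f t" for s
      by (simp add: \<Delta>_def algebra_simps)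
    then show ?thesis
      using second_difference_approx[OF assms(1-3,5,7) pos] unfolding B2_def by simp
  qed
  ultimately have "\<forall>\<^sub>F s in at_right 0. 0 < s \<and> norm (\<Delta> s - s\<^sup>2 *\<^sub>R B1) \<le> norm (B1 - B2) / 4 * s\<^sup>2
      \<and> norm (\<Delta> s - s\<^sup>2 *\<^sub>R B2) \<le> norm (B1 - B2) / 4 * s\<^sup>2"
    using eventually_at_right_less by eventually_elim blast
  then obtain s where "0 < s" and s: "norm (\<Delta> s - s\<^sup>2 *\<^sub>R B1) \<le> norm (B1 - B2) / 4 * s\<^sup>2"
      "norm (\<Delta> s - s\<^sup>2 *\<^sub>R B2) \<le> norm (B1 - B2) / 4 * s\<^sup>2"
    using eventually_happens'[OF trivial_limit_at_right_real] by blast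
  have "s\<^sup>2 * norm (B1 - B2) = norm (s\<^sup>2 *\<^sub>R (B1 - B2))"
    by simp
  also have "\<dots> = norm ((\<Delta> s - s\<^sup>2 *\<^sub>R B2) - (\<Delta> s - s\<^sup>2 *\<^sub>R B1))"
    by (simp add: algebra_simps)
  also have "\<dots> \<le> norm (B1 - B2) / 4 * s\<^sup>2 + norm (B1 - B2) / 4 * s\<^sup>2"
    using norm_triangle_ineq4[of "\<Delta> s - s\<^sup>2 *\<^sub>R B2" "\<Delta> s - s\<^sup>2 *\<^sub>R B1"] s by linarith
  finally show False
    using \<open>0 < s\<close> pos by (simp add: field_simps mult_le_0_iff)
qed

lemma smooth_on_differentiable:
  assumes "smooth_on U f" "x \<in> U"
  shows "f differentiable (at x)"
    and "(\<lambda>y. frechet_derivative f (at y) v) differentiable (at x)"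
    and "(\<lambda>y. frechet_derivative (\<lambda>z. frechet_derivative f (at z) v) (at y) w) differentiable (at x)"
proof -
  have iter: "iter_pd vs f differentiable (at x)" for vs
    using assms unfolding smooth_on_def by blast
  show "f differentiable (at x)"
    using iter[of "[]"] by simp
  show "(\<lambda>y. frechet_derivative f (at y) v) differentiable (at x)"
    using iter[of "[v]"] by simp
  show "(\<lambda>y. frechet_derivative (\<lambda>z. frechet_derivative f (at z) v) (at y) w) differentiable (at x)"
    using iter[of "[w, v]"] by simp
qed

lemma smooth_on_second_derivative_symmetric:
  fixes f :: "'a::real_normed_vector \<Rightarrow> 'b::real_inner"
  assumes "smooth_on U f" "open U" "t \<in> U"
  shows "frechet_derivative (\<lambda>y. frechet_derivative f (at y) v) (at t) w
       = frechet_derivative (\<lambda>y. frechet_derivative f (at y) w) (at t) v"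
  using assms(2,3) smooth_on_differentiable[OF assms(1)]
  by (intro frechet_derivative_second_symmetric) (auto intro: differentiable_imp_continuous_within)

section \<open>Wirtinger derivatives\<close>

lemma frechet_derivative_wirt:
  assumes "(\<lambda>y. frechet_derivative f (at y) (axis j 1)) differentiable (at t)"
    and "(\<lambda>y. frechet_derivative f (at y) (axis j \<i>)) differentiable (at t)"
  shows "frechet_derivative (wirt f j) (at t) c =
    (frechet_derivative (\<lambda>y. frechet_derivative f (at y) (axis j 1)) (at t) c
     - \<i> * frechet_derivative (\<lambda>y. frechet_derivative f (at y) (axis j \<i>)) (at t) c) / 2"
proof -
  have "(wirt f j has_derivative (\<lambda>c. (frechet_derivative (\<lambda>y. frechet_derivative f (at y) (axis j 1)) (at t) c
     - \<i> * frechet_derivative (\<lambda>y. frechet_derivative f (at y) (axis j \<i>)) (at t) c) / 2)) (at t)"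
    unfolding wirt_def[abs_def] using assms[unfolded frechet_derivative_works]
    by (auto intro!: derivative_eq_intros)
  then show ?thesis
    by (simp add: frechet_derivative_at[symmetric])
qed

lemma wirt_wirt_commute:
  assumes "smooth_on U f" "open U" "t \<in> U"
  shows "wirt (wirt f j) l t = wirt (wirt f l) j t"
proof -
  define D2 where "D2 a b = frechet_derivative (\<lambda>y. frechet_derivative f (at y) a) (at t) b" for a b
  have D2_sym: "D2 a b = D2 b a" for a b
    unfolding D2_def by (rule smooth_on_second_derivative_symmetric[OF assms])
  have W: "wirt (wirt f j) l t = (D2 (axis j 1) (axis l 1) - \<i> * D2 (axis j \<i>) (axis l 1)
      - \<i> * D2 (axis j 1) (axis l \<i>) - D2 (axis j \<i>) (axis l \<i>)) / 4" for j l
    unfolding wirt_def[of "wirt f j"] D2_def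
    using smooth_on_differentiable(2)[OF assms(1,3)]
    by (simp add: frechet_derivative_wirt field_simps)
  show ?thesis
    unfolding W[of j l] W[of l j] D2_sym[of "axis l 1" "axis j 1"] D2_sym[of "axis l \<i>" "axis j 1"]
      D2_sym[of "axis l 1" "axis j \<i>"] D2_sym[of "axis l \<i>" "axis j \<i>"]
    by (simp add: algebra_simps)
qed

lemma frechet_derivative_cong_open:
  assumes "open U" "t \<in> U" "\<And>s. s \<in> U \<Longrightarrow> f s = g s"
  shows "frechet_derivative f (at t) = frechet_derivative g (at t)"
proof -
  have "(f has_derivative D) (at t) \<longleftrightarrow> (g has_derivative D) (at t)" for D
    using assms has_derivative_transform_within_open[of _ D t UNIV U] by metis
  then show ?thesis
    unfolding frechet_derivative_def by simp
qed

lemma wirt_cong_open: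
  "open U \<Longrightarrow> t \<in> U \<Longrightarrow> (\<And>s. s \<in> U \<Longrightarrow> f s = g s) \<Longrightarrow> wirt f j t = wirt g j t"
  unfolding wirt_def by (simp add: frechet_derivative_cong_open[of U t f g])

lemma wirtbar_cong_open:
  "open U \<Longrightarrow> t \<in> U \<Longrightarrow> (\<And>s. s \<in> U \<Longrightarrow> f s = g s) \<Longrightarrow> wirtbar f j t = wirtbar g j t"
  unfolding wirtbar_def by (simp add: frechet_derivative_cong_open[of U t f g])

lemma wirt_mult:
  assumes "f differentiable (at t)" "g differentiable (at t)"
  shows "wirt (\<lambda>s. f s * g s) j t = wirt f j t * g t + f t * wirt g j t"
proof -
  have "frechet_derivative (\<lambda>s. f s * g s) (at t) =
      (\<lambda>h. f t * frechet_derivative g (at t) h + frechet_derivative f (at t) h * g t)"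
    using assms[unfolded frechet_derivative_works]
    by (intro frechet_derivative_at[symmetric] has_derivative_mult)
  then show ?thesis
    by (simp add: wirt_def field_simps)
qed

lemma wirt_sum:
  assumes "finite I" "\<And>i. i \<in> I \<Longrightarrow> f i differentiable (at t)"
  shows "wirt (\<lambda>s. \<Sum>i\<in>I. f i s) j t = (\<Sum>i\<in>I. wirt (f i) j t)"
proof -
  have "frechet_derivative (\<lambda>s. \<Sum>i\<in>I. f i s) (at t) = (\<lambda>h. \<Sum>i\<in>I. frechet_derivative (f i) (at t) h)"
    using assms[unfolded frechet_derivative_works]
    by (intro frechet_derivative_at[symmetric] has_derivative_sum)
  then show ?thesis
    by (simp add: wirt_def sum_divide_distrib[symmetric] sum_subtractf sum_distrib_left)
qed

lemma wirt_const [simp]: "wirt (\<lambda>s. c) j t = 0"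
  by (simp add: wirt_def)

lemma frechet_derivative_cnj:
  assumes "f differentiable (at t)"
  shows "frechet_derivative (\<lambda>s. cnj (f s)) (at t) = (\<lambda>h. cnj (frechet_derivative f (at t) h))"
  using assms[unfolded frechet_derivative_works]
  by (intro frechet_derivative_at[symmetric] has_derivative_cnj)

lemma wirt_cnj: "f differentiable (at t) \<Longrightarrow> wirt (\<lambda>s. cnj (f s)) j t = cnj (wirtbar f j t)"
  by (simp add: wirt_def wirtbar_def frechet_derivative_cnj)

lemma wirtbar_cnj: "f differentiable (at t) \<Longrightarrow> wirtbar (\<lambda>s. cnj (f s)) j t = cnj (wirt f j t)"
  by (simp add: wirt_def wirtbar_def frechet_derivative_cnj)

lemma wirtbar_holo_on:
  fixes f :: "complex^'n \<Rightarrow> complex"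
  assumes "holo_on U f" "t \<in> U"
  shows "wirtbar f j t = 0"
proof -
  have "axis j \<i> = \<i> *s (axis j 1 :: complex^'n)"
    by (simp add: vec_eq_iff axis_def)
  with assms show ?thesis
    unfolding holo_on_def wirtbar_def by simp
qed

lemma matrix_add_rdistrib: "(A + B) ** C = A ** C + B ** C"
  by (simp add: matrix_matrix_mult_def vec_eq_iff sum.distrib distrib_right)

lemma matrix_diff_ldistrib: "C ** (A - B) = C ** A - C ** (B :: 'a::ring_1^'n^'m)"
  by (simp add: matrix_matrix_mult_def vec_eq_iff sum_subtractf right_diff_distrib)

lemma matrix_diff_rdistrib: "(A - B) ** C = A ** C - B ** (C :: 'a::ring_1^'n^'m)"
  by (simp add: matrix_matrix_mult_def vec_eq_iff sum_subtractf left_diff_distrib)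

lemma matrix_neg_left: "(- A) ** B = - (A ** (B :: 'a::ring_1^'n^'m))"
  by (simp add: matrix_matrix_mult_def vec_eq_iff sum_negf)

lemma matrix_inv_right: "invertible A \<Longrightarrow> A ** matrix_inv A = mat 1"
  unfolding invertible_def matrix_inv_def by (rule someI2_ex) auto

lemma matrix_inv_left: "invertible A \<Longrightarrow> matrix_inv A ** A = mat 1"
  unfolding invertible_def matrix_inv_def by (rule someI2_ex) auto

lemma invertible_if_posdef:
  fixes A :: "complex^'r^'r"
  assumes "\<forall>v::complex^'r. v \<noteq> 0 \<longrightarrow> 0 < Re (\<Sum>a\<in>UNIV. \<Sum>b\<in>UNIV. cnj (v $ a) * A $ a $ b * v $ b)"
  shows "invertible A"
  unfolding invertible_left_inverse matrix_left_invertible_ker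
proof (intro allI impI)
  fix x assume "A *v x = 0"
  have "(\<Sum>a\<in>UNIV. \<Sum>b\<in>UNIV. cnj (x $ a) * A $ a $ b * x $ b) = (\<Sum>a\<in>UNIV. cnj (x $ a) * (A *v x) $ a)"
    by (simp add: matrix_vector_mult_def sum_distrib_left mult.assoc)
  also have "\<dots> = 0"
    using \<open>A *v x = 0\<close> by simp
  finally have "\<not> 0 < Re (\<Sum>a\<in>UNIV. \<Sum>b\<in>UNIV. cnj (x $ a) * A $ a $ b * x $ b)"
    by simp
  with assms show "x = 0"
    by blast
qed

lemma cadj_mult: "cadj (A ** B) = cadj B ** cadj A"
  by (simp add: cadj_def matrix_matrix_mult_def vec_eq_iff mult.commute)

lemma cadj_cadj [simp]: "cadj (cadj A) = A"
  by (simp add: cadj_def vec_eq_iff)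

lemma cadj_mat_1 [simp]: "cadj (mat 1) = mat 1"
  by (simp add: cadj_def mat_def vec_eq_iff)

lemma trace_cadj: "trace (cadj A) = cnj (trace A)"
  by (simp add: cadj_def trace_def)

lemma cadj_matrix_inv_hermitian:
  assumes "cadj A = A" "invertible A"
  shows "cadj (matrix_inv A) = matrix_inv A"
proof -
  have "cadj (matrix_inv A) ** A = mat 1"
    using cadj_mult[of A "matrix_inv A"] matrix_inv_right[OF assms(2)] assms(1) by simp
  then have "cadj (matrix_inv A) = (cadj (matrix_inv A) ** A) ** matrix_inv A"
    by (metis matrix_inv_right[OF assms(2)] matrix_mul_assoc matrix_mul_rid)
  with \<open>cadj (matrix_inv A) ** A = mat 1\<close> show ?thesis
    by simp
qed

lemma matrix_inv_entry_cramer: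
  fixes A :: "'a::field^'n^'n"
  assumes "det A \<noteq> 0"
  shows "matrix_inv A $ a $ b = det (\<chi> i j. if j = a then axis b 1 $ i else A $ i $ j) / det A"
proof -
  have "A *v (matrix_inv A *v axis b 1) = axis b 1"
    using assms by (simp add: matrix_vector_mul_assoc matrix_inv_right invertible_det_nz)
  then have "matrix_inv A *v axis b 1 = (\<chi> k. det (\<chi> i j. if j = k then axis b 1 $ i else A $ i $ j) / det A)"
    using cramer[OF assms] by blast
  moreover have "(matrix_inv A *v axis b 1) $ a = matrix_inv A $ a $ b"
    by (simp add: matrix_vector_mult_def axis_def if_distrib cong: if_cong)
  ultimately show ?thesis
    by simp
qed

definition mat_differentiable :: "('a::real_normed_vector \<Rightarrow> complex^'c^'r) \<Rightarrow> 'a \<Rightarrow> bool" where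
  "mat_differentiable F t \<longleftrightarrow> (\<forall>a b. (\<lambda>s. F s $ a $ b) differentiable (at t))"

lemma mat_differentiable_mult:
  "mat_differentiable F t \<Longrightarrow> mat_differentiable H t \<Longrightarrow> mat_differentiable (\<lambda>s. F s ** H s) t"
  unfolding mat_differentiable_def matrix_matrix_mult_def by simp

lemma mat_differentiable_cadj:
  "mat_differentiable F t \<Longrightarrow> mat_differentiable (\<lambda>s. cadj (F s)) t"
  unfolding mat_differentiable_def cadj_def by (simp add: differentiable_cnj_iff)

lemma mat_differentiable_holo_on:
  "(\<And>a b. holo_on U (\<lambda>s. F s $ a $ b)) \<Longrightarrow> t \<in> U \<Longrightarrow> mat_differentiable F t"
  unfolding mat_differentiable_def holo_on_def by blast

lemma differentiable_trace:
  "mat_differentiable F t \<Longrightarrow> (\<lambda>s. trace (F s)) differentiable (at t)"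
  unfolding mat_differentiable_def trace_def by simp

lemma mwirt_mult:
  assumes "mat_differentiable F t" "mat_differentiable H t"
  shows "mwirt (\<lambda>s. F s ** H s) j t = mwirt F j t ** H t + F t ** mwirt H j t"
proof -
  have "wirt (\<lambda>s. \<Sum>c\<in>UNIV. F s $ a $ c * H s $ c $ b) j t
      = (\<Sum>c\<in>UNIV. wirt (\<lambda>s. F s $ a $ c) j t * H t $ c $ b + F t $ a $ c * wirt (\<lambda>s. H s $ c $ b) j t)"
    for a b
    using assms unfolding mat_differentiable_def by (simp add: wirt_sum wirt_mult)
  then show ?thesis
    unfolding mwirt_def matrix_matrix_mult_def by (simp add: vec_eq_iff sum.distrib)
qed

lemma wirt_trace:
  "mat_differentiable F t \<Longrightarrow> wirt (\<lambda>s. trace (F s)) j t = trace (mwirt F j t)"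
  unfolding mat_differentiable_def trace_def mwirt_def by (simp add: wirt_sum)

lemma mwirt_const [simp]: "mwirt (\<lambda>s. C) j t = 0"
  unfolding mwirt_def by (simp add: vec_eq_iff)

lemma mwirt_cong_open:
  assumes "open U" "t \<in> U" "\<And>s. s \<in> U \<Longrightarrow> F s = H s"
  shows "mwirt F j t = mwirt H j t"
proof -
  have "wirt (\<lambda>s. F s $ a $ b) j t = wirt (\<lambda>s. H s $ a $ b) j t" for a b
    using assms by (intro wirt_cong_open[of U t]) auto
  then show ?thesis
    unfolding mwirt_def by simp
qed

lemma mwirt_cadj_holo_on:
  assumes "\<And>a b. holo_on U (\<lambda>s. F s $ a $ b)" "t \<in> U"
  shows "mwirt (\<lambda>s. cadj (F s)) j t = 0"
proof -
  have "(\<lambda>s. F s $ b $ a) differentiable (at t)" for a b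
    using assms unfolding holo_on_def by blast
  then have "wirt (\<lambda>s. cnj (F s $ b $ a)) j t = 0" for a b
    by (simp add: wirt_cnj wirtbar_holo_on[OF assms])
  then show ?thesis
    unfolding mwirt_def cadj_def by (simp add: vec_eq_iff)
qed

lemma differentiable_det:
  "mat_differentiable M t \<Longrightarrow> (\<lambda>s. det (M s)) differentiable (at t)"
  unfolding det_def mat_differentiable_def
  by (intro differentiable_sum differentiable_mult differentiable_const ballI
      has_derivative_prod[THEN differentiableI]) (auto simp: frechet_derivative_works)

lemma mat_differentiable_mwirt:
  assumes "\<And>a b. smooth_on U (\<lambda>s. F s $ a $ b)" "t \<in> U"
  shows "mat_differentiable (mwirt F j) t"
  unfolding mat_differentiable_def mwirt_def wirt_def[abs_def]
  using smooth_on_differentiable(2)[OF assms(1,2)] by simp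

lemma mwirt_mwirt_commute:
  assumes "\<And>a b. smooth_on U (\<lambda>s. F s $ a $ b)" "open U" "t \<in> U"
  shows "mwirt (mwirt F j) l t = mwirt (mwirt F l) j t"
  unfolding mwirt_def[of "mwirt F j"] mwirt_def[of "mwirt F l"]
  by (simp add: mwirt_def wirt_wirt_commute[OF assms(1-3)])

section \<open>The Hermitian metric and its Chern connection\<close>

lemma herm_metric_invertible: "herm_metric U G \<Longrightarrow> s \<in> U \<Longrightarrow> invertible (G s)"
  unfolding herm_metric_def by (blast intro: invertible_if_posdef)

lemma herm_metric_cadj: "herm_metric U G \<Longrightarrow> s \<in> U \<Longrightarrow> cadj (G s) = G s"
  unfolding herm_metric_def by blast

lemma herm_metric_smooth: "herm_metric U G \<Longrightarrow> smooth_on U (\<lambda>s. G s $ a $ b)"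
  unfolding herm_metric_def by blast

lemma mat_differentiable_herm_metric: "herm_metric U G \<Longrightarrow> t \<in> U \<Longrightarrow> mat_differentiable G t"
  unfolding mat_differentiable_def using herm_metric_smooth smooth_on_differentiable(1) by blast

lemma mat_differentiable_herm_metric_inv:
  assumes "herm_metric U G" "open U" "t \<in> U"
  shows "mat_differentiable (\<lambda>s. matrix_inv (G s)) t"
  unfolding mat_differentiable_def
proof (intro allI)
  fix a b
  define N where "N s = (\<chi> i j. if j = a then axis b 1 $ i else G s $ i $ j)" for s
  have "(\<lambda>s. N s $ i $ j) differentiable (at t)" for i j
    using mat_differentiable_herm_metric[OF assms(1,3)]
    by (cases "j = a") (simp_all add: mat_differentiable_def N_def)
  then have "mat_differentiable N t"
    by (simp add: mat_differentiable_def)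
  then have "(\<lambda>s. det (N s) / det (G s)) differentiable (at t)"
    using mat_differentiable_herm_metric[OF assms(1,3)] herm_metric_invertible[OF assms(1,3)]
    by (intro differentiable_divide differentiable_det) (auto simp: invertible_det_nz)
  then obtain D where "((\<lambda>s. det (N s) / det (G s)) has_derivative D) (at t)"
    unfolding differentiable_def by blast
  moreover have "det (N s) / det (G s) = matrix_inv (G s) $ a $ b" if "s \<in> U" for s
    unfolding N_def using herm_metric_invertible[OF assms(1) that]
    by (intro matrix_inv_entry_cramer[symmetric]) (simp add: invertible_det_nz)
  ultimately have "((\<lambda>s. matrix_inv (G s) $ a $ b) has_derivative D) (at t)"
    by (rule has_derivative_transform_within_open[OF _ assms(2,3)])
  then show "(\<lambda>s. matrix_inv (G s) $ a $ b) differentiable (at t)"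
    unfolding differentiable_def by blast
qed

lemma mwirt_herm_metric_inv:
  assumes "herm_metric U G" "open U" "t \<in> U"
  shows "mwirt (\<lambda>s. matrix_inv (G s)) l t = - (matrix_inv (G t) ** mwirt G l t ** matrix_inv (G t))"
proof -
  define X where "X = mwirt (\<lambda>s. matrix_inv (G s)) l t"
  have "mwirt (\<lambda>s. matrix_inv (G s) ** G s) l t = mwirt (\<lambda>s. mat 1) l t"
    using herm_metric_invertible[OF assms(1)] matrix_inv_left
    by (intro mwirt_cong_open[OF assms(2,3)]) auto
  then have "X ** G t + matrix_inv (G t) ** mwirt G l t = 0"
    unfolding X_def
    by (simp add: mwirt_mult mat_differentiable_herm_metric_inv[OF assms] mat_differentiable_herm_metric[OF assms(1,3)])
  then have "X ** G t = - (matrix_inv (G t) ** mwirt G l t)"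
    by (simp add: eq_neg_iff_add_eq_0)
  then have "X ** G t ** matrix_inv (G t) = - (matrix_inv (G t) ** mwirt G l t ** matrix_inv (G t))"
    by (simp add: matrix_neg_left)
  then show ?thesis
    using matrix_inv_right[OF herm_metric_invertible[OF assms(1,3)]]
    by (simp add: X_def matrix_mul_assoc[symmetric])
qed

lemma chern_curv_20_eq_0:
  assumes "herm_metric U G" "open U" "t \<in> U"
  shows "mwirt (chern_conn G j) l t - mwirt (chern_conn G l) j t
       + (chern_conn G l t ** chern_conn G j t - chern_conn G j t ** chern_conn G l t) = 0"
proof -
  have chern_eq: "chern_conn G j = (\<lambda>s. matrix_inv (G s) ** mwirt G j s)" for j
    by (simp add: fun_eq_iff chern_conn_def)
  have "mwirt (chern_conn G j) l t
      = - (chern_conn G l t ** chern_conn G j t) + matrix_inv (G t) ** mwirt (mwirt G j) l t" for j l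
    unfolding chern_eq
    using mat_differentiable_herm_metric_inv[OF assms]
      mat_differentiable_mwirt[OF herm_metric_smooth[OF assms(1)] assms(3)]
    by (simp add: mwirt_mult mwirt_herm_metric_inv[OF assms] matrix_neg_left matrix_mul_assoc)
  then show ?thesis
    using mwirt_mwirt_commute[OF herm_metric_smooth[OF assms(1)] assms(2,3), of j l]
    by simp
qed

lemma mat_differentiable_hadj_holo_on:
  assumes "herm_metric U G" "open U" "t \<in> U" "\<And>a b. holo_on U (\<lambda>s. F s $ a $ b)"
  shows "mat_differentiable (\<lambda>s. hadj G s (F s)) t"
  unfolding hadj_def
  by (intro mat_differentiable_mult mat_differentiable_cadj mat_differentiable_holo_on[OF assms(4,3)]
      mat_differentiable_herm_metric_inv[OF assms(1-3)] mat_differentiable_herm_metric[OF assms(1,3)])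

text \<open>For holomorphic \<open>F\<close> this says \<open>[\<partial>\<^sup>h, F\<^sup>*] = 0\<close>: the adjoint is antiholomorphic
  and the Chern connection is compatible with \<open>h\<close>.\<close>

lemma mwirt_hadj_holo_on:
  assumes "herm_metric U G" "open U" "t \<in> U" "\<And>a b. holo_on U (\<lambda>s. F s $ a $ b)"
  shows "mwirt (\<lambda>s. hadj G s (F s)) l t
    = hadj G t (F t) ** chern_conn G l t - chern_conn G l t ** hadj G t (F t)"
proof -
  define P where "P = matrix_inv (G t)"
  have GP: "G t ** P = mat 1"
    unfolding P_def by (rule matrix_inv_right[OF herm_metric_invertible[OF assms(1,3)]])
  have "mwirt (\<lambda>s. hadj G s (F s)) l t
      = - (P ** mwirt G l t ** P) ** cadj (F t) ** G t + P ** cadj (F t) ** (G t ** P) ** mwirt G l t"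
    unfolding hadj_def P_def[symmetric] GP
    using mat_differentiable_herm_metric_inv[OF assms(1-3)] mat_differentiable_herm_metric[OF assms(1,3)]
      mat_differentiable_cadj[OF mat_differentiable_holo_on[OF assms(4,3)]]
    by (simp add: mwirt_mult mat_differentiable_mult mwirt_herm_metric_inv[OF assms(1-3)]
        mwirt_cadj_holo_on[OF assms(4,3)] P_def)
  also have "\<dots> = hadj G t (F t) ** chern_conn G l t - chern_conn G l t ** hadj G t (F t)"
    by (simp add: hadj_def chern_conn_def P_def matrix_diff_ldistrib matrix_neg_left matrix_mul_assoc)
  finally show ?thesis .
qed

section \<open>The Hodge semi-metric\<close>

text \<open>\<open>higgs_cov_deriv G \<theta> l j\<close> is the \<open>dt\<^sup>l\<close>-coefficient of \<open>[\<partial>\<^sup>h, \<theta>\<^sub>j]\<close>.\<close>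

definition higgs_cov_deriv ::
  "(complex^'n \<Rightarrow> complex^'r^'r) \<Rightarrow> ('n \<Rightarrow> complex^'n \<Rightarrow> complex^'r^'r) \<Rightarrow> 'n \<Rightarrow> 'n \<Rightarrow> complex^'n \<Rightarrow> complex^'r^'r"
  where "higgs_cov_deriv G \<theta> l j t = mwirt (\<theta> j) l t + chern_conn G l t ** \<theta> j t - \<theta> j t ** chern_conn G l t"

lemma higgs_curv_20_eq:
  "higgs_curv_20 G \<theta> l j t =
     (mwirt (chern_conn G j) l t - mwirt (chern_conn G l) j t
      + (chern_conn G l t ** chern_conn G j t - chern_conn G j t ** chern_conn G l t))
   + (higgs_cov_deriv G \<theta> l j t - higgs_cov_deriv G \<theta> j l t)
   + (\<theta> l t ** \<theta> j t - \<theta> j t ** \<theta> l t)"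
  by (simp add: higgs_curv_20_def higgs_cov_deriv_def algebra_simps)

lemma higgs_cov_deriv_symmetric:
  assumes "herm_metric U G" "open U" "t \<in> U" "higgs_field U \<theta>"
    and "higgs_curv_20 G \<theta> l j t = 0"
  shows "higgs_cov_deriv G \<theta> l j t = higgs_cov_deriv G \<theta> j l t"
proof -
  have "\<theta> l t ** \<theta> j t = \<theta> j t ** \<theta> l t"
    using assms(3,4) unfolding higgs_field_def by blast
  then show ?thesis
    using assms(5) unfolding higgs_curv_20_eq chern_curv_20_eq_0[OF assms(1-3)] by simp
qed

lemma hodge_coeff_eq: "hodge_coeff G \<theta> j k = (\<lambda>s. trace (\<theta> j s ** hadj G s (\<theta> k s)))"
  by (simp add: fun_eq_iff hodge_coeff_def end_ip_def)

lemma mat_differentiable_higgs_hadj: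
  assumes "herm_metric U G" "open U" "t \<in> U" "higgs_field U \<theta>"
  shows "mat_differentiable (\<lambda>s. \<theta> j s ** hadj G s (\<theta> k s)) t"
  using assms(4) unfolding higgs_field_def
  by (intro mat_differentiable_mult mat_differentiable_holo_on[OF _ assms(3)]
      mat_differentiable_hadj_holo_on[OF assms(1-3)]) auto

lemma wirt_hodge_coeff:
  assumes "herm_metric U G" "open U" "t \<in> U" "higgs_field U \<theta>"
  shows "wirt (hodge_coeff G \<theta> j k) l t = trace (higgs_cov_deriv G \<theta> l j t ** hadj G t (\<theta> k t))"
proof -
  define A where "A = chern_conn G l t"
  define K where "K = hadj G t (\<theta> k t)"
  have holo: "\<And>j a b. holo_on U (\<lambda>s. \<theta> j s $ a $ b)"
    using assms(4) unfolding higgs_field_def by blast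
  have cyclic: "trace (\<theta> j t ** (K ** A)) = trace (A ** \<theta> j t ** K)"
    using trace_mul_sym[of "\<theta> j t ** K" A] by (simp add: matrix_mul_assoc)
  have "wirt (hodge_coeff G \<theta> j k) l t = trace (mwirt (\<theta> j) l t ** K + \<theta> j t ** (K ** A - A ** K))"
    unfolding hodge_coeff_eq K_def A_def
    by (simp add: wirt_trace mat_differentiable_higgs_hadj[OF assms] mwirt_mult
        mat_differentiable_holo_on[OF holo assms(3)] mat_differentiable_hadj_holo_on[OF assms(1-3) holo]
        mwirt_hadj_holo_on[OF assms(1-3) holo])
  also have "\<dots> = trace ((mwirt (\<theta> j) l t + A ** \<theta> j t - \<theta> j t ** A) ** K)"
    using cyclic
    by (simp add: matrix_diff_ldistrib matrix_diff_rdistrib matrix_add_rdistrib matrix_add_ldistrib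
        trace_add trace_sub matrix_mul_assoc)
  finally show ?thesis
    by (simp add: higgs_cov_deriv_def A_def K_def)
qed

lemma hodge_coeff_cnj:
  assumes "herm_metric U G" "s \<in> U"
  shows "hodge_coeff G \<theta> j k s = cnj (hodge_coeff G \<theta> k j s)"
proof -
  have cG: "cadj (G s) = G s" and cP: "cadj (matrix_inv (G s)) = matrix_inv (G s)"
    using herm_metric_cadj[OF assms] cadj_matrix_inv_hermitian herm_metric_invertible[OF assms] by auto
  have "cnj (hodge_coeff G \<theta> k j s) = trace (G s ** (\<theta> j s ** matrix_inv (G s) ** cadj (\<theta> k s)))"
    unfolding hodge_coeff_eq hadj_def trace_cadj[symmetric] by (simp add: cadj_mult cG cP matrix_mul_assoc)
  also have "\<dots> = trace ((\<theta> j s ** matrix_inv (G s) ** cadj (\<theta> k s)) ** G s)"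
    by (rule trace_mul_sym)
  also have "\<dots> = hodge_coeff G \<theta> j k s"
    unfolding hodge_coeff_eq hadj_def by (simp add: matrix_mul_assoc)
  finally show ?thesis
    by simp
qed

lemma wirtbar_hodge_coeff:
  assumes "herm_metric U G" "open U" "t \<in> U" "higgs_field U \<theta>"
  shows "wirtbar (hodge_coeff G \<theta> j k) l t = cnj (wirt (hodge_coeff G \<theta> k j) l t)"
proof -
  have "wirtbar (hodge_coeff G \<theta> j k) l t = wirtbar (\<lambda>s. cnj (hodge_coeff G \<theta> k j s)) l t"
    using hodge_coeff_cnj[OF assms(1)] by (intro wirtbar_cong_open[OF assms(2,3)]) blast
  also have "\<dots> = cnj (wirt (hodge_coeff G \<theta> k j) l t)"
    unfolding hodge_coeff_eq
    by (intro wirtbar_cnj differentiable_trace mat_differentiable_higgs_hadj[OF assms])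
  finally show ?thesis .
qed

theorem proposition3p1:
  fixes U :: "(complex^'n) set"
    and G :: "complex^'n \<Rightarrow> complex^'r^'r"
    and \<theta> :: "'n \<Rightarrow> complex^'n \<Rightarrow> complex^'r^'r"
  assumes "open U"
    and "higgs_field U \<theta>"
    and "herm_metric U G"
    and "\<forall>t\<in>U. \<forall>l j. higgs_curv_20 G \<theta> l j t = 0"
  shows "fundamental_form_d_closed U G \<theta>"
  unfolding fundamental_form_d_closed_def
proof (intro ballI allI conjI)
  fix t l j k
  assume "t \<in> U"
  have sym: "wirt (hodge_coeff G \<theta> j k) l t = wirt (hodge_coeff G \<theta> l k) j t" for j k l
    using assms \<open>t \<in> U\<close>
    by (simp add: wirt_hodge_coeff higgs_cov_deriv_symmetric[OF assms(3,1) \<open>t \<in> U\<close> assms(2)])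
  show "domega_21 G \<theta> l j k t = 0"
    unfolding domega_21_def sym[of j k l] by simp
  show "domega_12 G \<theta> j l k t = 0"
    unfolding domega_12_def wirtbar_hodge_coeff[OF assms(3,1) \<open>t \<in> U\<close> assms(2)] sym[of k j l] by simp
qed

end
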